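(* Let $n,s,k$ be positive integers with $n\ge(s+1)k$. Suppose that for any cross-dependent families $\mathcal G_1,\ldots,\mathcal G_{s+1}\subset\binom{[n]}{k}$ we have $\min_i|\mathcal G_i|\le\binom{n}{k}-\binom{n-s}{k}$. Then for any cross-dependent families $\mathcal F_1,\ldots,\mathcal F_{s+1}\subset\binom{[n+1]}{k}$ we have $\min_i|\mathcal F_i|\le\binom{n+1}{k}-\binom{n+1-s}{k}$.
   Context: $[n]=\{1,\ldots,n\}$ and $\binom{X}{k}$ denotes the family of all $k$-element subsets of $X$. Families $\mathcal F_1,\ldots,\mathcal F_{s+1}$ are called cross-dependent if there are no pairwise disjoint sets $F_1,\ldots,F_{s+1}$ with $F_i\in\mathcal F_i$ for every $i$. *)

theory Defs
  imports Main
begin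

definition cross_dependent :: "nat \<Rightarrow> (nat \<Rightarrow> 'a set set) \<Rightarrow> bool" where
  "cross_dependent s F \<longleftrightarrow>
     \<not> (\<exists>A :: nat \<Rightarrow> 'a set.
          (\<forall>i\<le>s. A i \<in> F i) \<and>
          (\<forall>i\<le>s. \<forall>j\<le>s. i \<noteq> j \<longrightarrow> A i \<inter> A j = {}))"

definition ksubsets :: "'a set \<Rightarrow> nat \<Rightarrow> 'a set set" where
  "ksubsets X k = {A. A \<subseteq> X \<and> card A = k}"

end

theory Submission
  imports Defs "HOL-Combinatorics.Transposition"
begin

text \<open>All families are shifted from the new point n+1 towards the old ones; shifting preserves
sizes, k-uniformity and cross-dependence. The members avoiding n+1 then form cross-dependent
families on [n], so by hypothesis one of them, the i-th, has at most C(n,k) - C(n-s,k) members.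
Because the i-th family is shifted, the link of n+1 in it is disjoint from the shadow of the
k-subsets of [n] that it misses. There are at least C(n-s,k) of these, so by Lovasz's form of the
Kruskal-Katona theorem their shadow has at least C(n-s,k-1) members, and the link has at most
C(n,k-1) - C(n-s,k-1). Pascal's rule adds up the two bounds.\<close>

definition shift :: "'a \<Rightarrow> 'a \<Rightarrow> 'a set \<Rightarrow> 'a set" where
  "shift x y A = (if x \<in> A \<and> y \<notin> A then insert y (A - {x}) else A)"

definition shift_family :: "'a \<Rightarrow> 'a \<Rightarrow> 'a set set \<Rightarrow> 'a set set" where
  "shift_family x y F = {A \<in> F. shift x y A \<in> F} \<union> shift x y ` {A \<in> F. shift x y A \<notin> F}"

definition shifted :: "'a \<Rightarrow> 'a \<Rightarrow> 'a set set \<Rightarrow> bool" where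
  "shifted x y F \<longleftrightarrow> (\<forall>A\<in>F. shift x y A \<in> F)"

definition shadow :: "'a set set \<Rightarrow> 'a set set" where
  "shadow F = {A - {x} | A x. A \<in> F \<and> x \<in> A}"

definition link :: "'a \<Rightarrow> 'a set set \<Rightarrow> 'a set set" where
  "link x F = (\<lambda>A. A - {x}) ` {A \<in> F. x \<in> A}"

lemma shift_eq_transpose_image: "y \<notin> A \<Longrightarrow> shift x y A = transpose x y ` A"
  by (auto simp: shift_def transpose_def)

lemma moved_if_shift_notin: "A \<in> F \<Longrightarrow> shift x y A \<notin> F \<Longrightarrow> x \<in> A \<and> y \<notin> A"
  by (auto simp: shift_def split: if_splits)

lemma shifted_insert_Diff_mem:
  "shifted x y F \<Longrightarrow> A \<in> F \<Longrightarrow> x \<in> A \<Longrightarrow> y \<notin> A \<Longrightarrow> insert y (A - {x}) \<in> F"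
  unfolding shifted_def shift_def by (metis (no_types, lifting))

lemma transpose_image_involutory [simp]: "transpose x y ` transpose x y ` A = A"
  by (simp add: image_comp)

lemma mem_shift_image_moved_iff:
  "B \<in> shift x y ` {A \<in> F. shift x y A \<notin> F} \<longleftrightarrow>
     y \<in> B \<and> x \<notin> B \<and> B \<notin> F \<and> transpose x y ` B \<in> F" (is "?lhs \<longleftrightarrow> ?rhs")
proof
  assume ?lhs
  then obtain A where A: "A \<in> F" "shift x y A \<notin> F" "B = shift x y A"
    by blast
  then have "x \<in> A" "y \<notin> A"
    using moved_if_shift_notin by fast+
  then have moved: "shift x y A = transpose x y ` A"
    by (simp add: shift_eq_transpose_image)
  from A \<open>x \<in> A\<close> \<open>y \<notin> A\<close> show ?rhs
    unfolding A(3) moved by (auto simp: in_transpose_image_iff)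
next
  assume ?rhs
  then have "shift x y (transpose x y ` B) = B"
    by (simp add: shift_eq_transpose_image in_transpose_image_iff)
  with \<open>?rhs\<close> show ?lhs
    by (metis (mono_tags, lifting) image_eqI mem_Collect_eq)
qed

lemma mem_shift_family_iff:
  "B \<in> shift_family x y F \<longleftrightarrow>
     (if x \<in> B \<and> y \<notin> B then B \<in> F \<and> transpose x y ` B \<in> F
      else if y \<in> B \<and> x \<notin> B then B \<in> F \<or> transpose x y ` B \<in> F
      else B \<in> F)"
proof -
  have "B \<in> F \<and> shift x y B \<in> F \<longleftrightarrow> B \<in> F \<and> (x \<in> B \<and> y \<notin> B \<longrightarrow> transpose x y ` B \<in> F)"
    by (auto simp: shift_def shift_eq_transpose_image[symmetric])
  then show ?thesis
    unfolding shift_family_def Un_iff mem_shift_image_moved_iff by auto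
qed

lemma mem_shift_family_imp_mem: "B \<in> shift_family x y F \<Longrightarrow> x \<in> B \<or> y \<notin> B \<Longrightarrow> B \<in> F"
  by (auto simp: mem_shift_family_iff split: if_splits)

lemma transpose_image_mem_of_mem_shift_family:
  "B \<in> shift_family x y F \<Longrightarrow> y \<notin> B \<or> B \<notin> F \<Longrightarrow> transpose x y ` B \<in> F"
  by (auto simp: mem_shift_family_iff split: if_splits)

lemma finite_shift_family: "finite F \<Longrightarrow> finite (shift_family x y F)"
  by (simp add: shift_family_def)

lemma card_shift_family:
  assumes "finite F"
  shows "card (shift_family x y F) = card F"
proof -
  let ?K = "{A \<in> F. shift x y A \<in> F}" and ?M = "{A \<in> F. shift x y A \<notin> F}"
  have "inj_on (shift x y) ?M"
  proof (rule inj_onI)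
    fix A B assume A: "A \<in> ?M" and B: "B \<in> ?M" and eq: "shift x y A = shift x y B"
    from A have "y \<notin> A"
      using moved_if_shift_notin[of A F x y] by simp
    moreover from B have "y \<notin> B"
      using moved_if_shift_notin[of B F x y] by simp
    ultimately have "transpose x y ` A = transpose x y ` B"
      using eq by (simp add: shift_eq_transpose_image)
    then show "A = B"
      by (simp add: inj_image_eq_iff inj_transpose)
  qed
  have disjoint: "?K \<inter> shift x y ` ?M = {}" "?K \<inter> ?M = {}"
    by blast+
  have "card (shift_family x y F) = card ?K + card (shift x y ` ?M)"
    unfolding shift_family_def using assms disjoint(1) by (simp add: card_Un_disjoint)
  also have "\<dots> = card ?K + card ?M"
    using \<open>inj_on (shift x y) ?M\<close> by (simp add: card_image)
  also have "\<dots> = card (?K \<union> ?M)"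
    using assms disjoint(2) by (simp add: card_Un_disjoint)
  also have "?K \<union> ?M = F"
    by blast
  finally show ?thesis .
qed

lemma shift_mem_ksubsets:
  assumes "A \<in> ksubsets V k" "y \<in> V"
  shows "shift x y A \<in> ksubsets V k"
proof (cases "x \<in> A \<and> y \<notin> A")
  case True
  then have "shift x y A = transpose x y ` A"
    by (simp add: shift_eq_transpose_image)
  moreover have "transpose x y ` A \<subseteq> V"
    using assms True by (auto simp: ksubsets_def transpose_def)
  ultimately show ?thesis
    using assms by (simp add: ksubsets_def card_image)
next
  case False
  then have "shift x y A = A"
    by (auto simp: shift_def)
  with assms show ?thesis
    by simp
qed

lemma shift_family_subset_ksubsets:
  assumes "F \<subseteq> ksubsets V k" "y \<in> V"
  shows "shift_family x y F \<subseteq> ksubsets V k"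
proof
  fix B assume "B \<in> shift_family x y F"
  then obtain A where "A \<in> F" "B = A \<or> B = shift x y A"
    unfolding shift_family_def by blast
  with assms shift_mem_ksubsets[of A V k y x] show "B \<in> ksubsets V k"
    by blast
qed

lemma filter_shift_family_subset:
  assumes "\<And>B. P B \<Longrightarrow> x \<in> B \<or> y \<notin> B"
  shows "{B \<in> shift_family x y F. P B} \<subseteq> {B \<in> F. P B}"
proof
  fix B assume "B \<in> {B \<in> shift_family x y F. P B}"
  with mem_shift_family_imp_mem[of B x y F] assms[of B] show "B \<in> {B \<in> F. P B}"
    by simp
qed

lemma card_filter_shift_family_le:
  assumes "finite F" "\<And>B. P B \<Longrightarrow> x \<in> B \<or> y \<notin> B"
  shows "card {B \<in> shift_family x y F. P B} \<le> card {B \<in> F. P B}"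
  using assms by (simp add: card_mono filter_shift_family_subset)

lemma card_filter_shift_family_less:
  assumes "finite F" "\<not> shifted x y F"
    and "\<And>B. P B \<Longrightarrow> x \<in> B \<or> y \<notin> B" "\<And>A. x \<in> A \<Longrightarrow> y \<notin> A \<Longrightarrow> P A"
  shows "card {B \<in> shift_family x y F. P B} < card {B \<in> F. P B}"
proof (rule psubset_card_mono)
  from assms(2) obtain A where A: "A \<in> F" "shift x y A \<notin> F"
    unfolding shifted_def by blast
  then have "x \<in> A" "y \<notin> A"
    using moved_if_shift_notin[OF A] by simp_all
  with A have "A \<notin> shift_family x y F"
    by (simp add: mem_shift_family_iff shift_eq_transpose_image)
  moreover have "A \<in> {B \<in> F. P B}"
    using A \<open>x \<in> A\<close> \<open>y \<notin> A\<close> assms(4) by simp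
  ultimately show "{B \<in> shift_family x y F. P B} \<subset> {B \<in> F. P B}"
    using filter_shift_family_subset[of P x y F] assms(3) by blast
  show "finite {B \<in> F. P B}"
    using assms(1) by simp
qed

text \<open>A member new to the shifted family contains y but not x, so y lies in no other B i, and
swapping x and y sends every B i back into F i.\<close>

lemma transpose_image_mem_of_disjoint:
  assumes B: "\<And>i. i \<le> s \<Longrightarrow> B i \<in> shift_family x y (F i)"
    and disjoint: "\<And>i j. i \<le> s \<Longrightarrow> j \<le> s \<Longrightarrow> i \<noteq> j \<Longrightarrow> B i \<inter> B j = {}"
    and "i\<^sub>0 \<le> s" "B i\<^sub>0 \<notin> F i\<^sub>0" "i \<le> s"
  shows "transpose x y ` B i \<in> F i"
proof (cases "i = i\<^sub>0")
  case True
  with assms(3,4) show ?thesis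
    using transpose_image_mem_of_mem_shift_family[OF B[OF assms(3)]] by blast
next
  case False
  from assms(3,4) have "y \<in> B i\<^sub>0"
    using mem_shift_family_imp_mem[OF B[OF assms(3)]] by blast
  with disjoint[OF assms(5,3) False] have "y \<notin> B i"
    by blast
  then show ?thesis
    using transpose_image_mem_of_mem_shift_family[OF B[OF assms(5)]] by blast
qed

lemma cross_dependent_shift_family:
  assumes "cross_dependent s F"
  shows "cross_dependent s (\<lambda>i. shift_family x y (F i))"
  unfolding cross_dependent_def
proof
  assume "\<exists>B. (\<forall>i\<le>s. B i \<in> shift_family x y (F i)) \<and> (\<forall>i\<le>s. \<forall>j\<le>s. i \<noteq> j \<longrightarrow> B i \<inter> B j = {})"
  then obtain B where "\<forall>i\<le>s. B i \<in> shift_family x y (F i)"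
    and "\<forall>i\<le>s. \<forall>j\<le>s. i \<noteq> j \<longrightarrow> B i \<inter> B j = {}"
    by blast
  then have B: "\<And>i. i \<le> s \<Longrightarrow> B i \<in> shift_family x y (F i)"
    and disjoint: "\<And>i j. i \<le> s \<Longrightarrow> j \<le> s \<Longrightarrow> i \<noteq> j \<Longrightarrow> B i \<inter> B j = {}"
    by simp_all
  have "\<exists>C. (\<forall>i\<le>s. C i \<in> F i) \<and> (\<forall>i\<le>s. \<forall>j\<le>s. i \<noteq> j \<longrightarrow> C i \<inter> C j = {})"
  proof (cases "\<forall>i\<le>s. B i \<in> F i")
    case True
    with disjoint show ?thesis
      by (intro exI[of _ B]) blast
  next
    case False
    then obtain i\<^sub>0 where "i\<^sub>0 \<le> s" "B i\<^sub>0 \<notin> F i\<^sub>0"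
      by blast
    with B disjoint have "transpose x y ` B i \<in> F i" if "i \<le> s" for i
      using that by (rule transpose_image_mem_of_disjoint)
    moreover have "transpose x y ` B i \<inter> transpose x y ` B j = {}"
      if "i \<le> s" "j \<le> s" "i \<noteq> j" for i j
      using disjoint[OF that] by (simp add: image_Int[OF inj_transpose, symmetric])
    ultimately show ?thesis
      by (intro exI[of _ "\<lambda>i. transpose x y ` B i"]) blast
  qed
  with assms show False
    unfolding cross_dependent_def by blast
qed

lemma shadowI: "A \<in> F \<Longrightarrow> x \<in> A \<Longrightarrow> A - {x} \<in> shadow F"
  unfolding shadow_def by blast

lemma shadowE:
  assumes "B \<in> shadow F"
  obtains A x where "A \<in> F" "x \<in> A" "B = A - {x}"
  using assms unfolding shadow_def by blast

lemma finite_ksubsets: "finite V \<Longrightarrow> finite (ksubsets V k)"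
  unfolding ksubsets_def by (rule finite_subset[of _ "Pow V"]) auto

lemma card_ksubsets: "finite V \<Longrightarrow> card (ksubsets V k) = card V choose k"
  unfolding ksubsets_def by (rule n_subsets)

lemma shadow_subset_ksubsets:
  assumes "F \<subseteq> ksubsets V k"
  shows "shadow F \<subseteq> ksubsets V (k - 1)"
proof
  fix B assume "B \<in> shadow F"
  then obtain A x where "A \<in> F" "x \<in> A" "B = A - {x}"
    by (rule shadowE)
  with assms show "B \<in> ksubsets V (k - 1)"
    by (auto simp: ksubsets_def)
qed

lemma shadow_shift_family_subset: "shadow (shift_family x y F) \<subseteq> shift_family x y (shadow F)"
proof
  let ?\<tau> = "transpose x y"
  fix B assume "B \<in> shadow (shift_family x y F)"
  then obtain C z where C: "C \<in> shift_family x y F" "z \<in> C" and B: "B = C - {z}"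
    by (rule shadowE)
  have "C \<in> F \<Longrightarrow> B \<in> shadow F"
    using C B by (simp add: shadowI)
  moreover have "?\<tau> ` C \<in> F \<Longrightarrow> ?\<tau> ` B \<in> shadow F"
    using C B shadowI[of "?\<tau> ` C" F "?\<tau> z"] by (simp add: image_set_diff inj_transpose)
  moreover have "C \<in> F \<or> ?\<tau> ` C \<in> F"
    using transpose_image_mem_of_mem_shift_family[OF C(1)] by blast
  ultimately have either: "B \<in> shadow F \<or> ?\<tau> ` B \<in> shadow F" and
    both: "C \<in> F \<and> ?\<tau> ` C \<in> F \<Longrightarrow> B \<in> shadow F \<and> ?\<tau> ` B \<in> shadow F"
    by blast+
  consider (moved) "x \<in> B" "y \<notin> B" | (target) "y \<in> B" "x \<notin> B" | (fixed) "x \<in> B \<longleftrightarrow> y \<in> B"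
    by blast
  then show "B \<in> shift_family x y (shadow F)"
  proof cases
    case moved
    then have "x \<in> C"
      using B by blast
    with C(1) have "C \<in> F \<and> ?\<tau> ` C \<in> F"
      by (cases "y \<in> C") (simp_all add: mem_shift_family_iff)
    with moved both show ?thesis
      by (simp add: mem_shift_family_iff)
  next
    case target
    with either show ?thesis
      by (simp add: mem_shift_family_iff)
  next
    case fixed
    then have "?\<tau> ` B = B"
      by simp
    with either fixed show ?thesis
      by (simp add: mem_shift_family_iff)
  qed
qed

lemma card_shadow_shift_family_le:
  assumes "finite (shadow F)"
  shows "card (shadow (shift_family x y F)) \<le> card (shadow F)"
proof -
  have "card (shadow (shift_family x y F)) \<le> card (shift_family x y (shadow F))"
    using assms by (intro card_mono finite_shift_family shadow_shift_family_subset)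
  also have "\<dots> = card (shadow F)"
    using assms by (rule card_shift_family)
  finally show ?thesis .
qed

lemma obtain_shifted_towards:
  assumes "finite V" "y \<in> V" "F \<subseteq> ksubsets V k"
  obtains G where "G \<subseteq> ksubsets V k" "card G = card F" "card (shadow G) \<le> card (shadow F)"
    "\<And>x. shifted x y G"
proof -
  let ?P = "\<lambda>G. G \<subseteq> ksubsets V k \<and> card G = card F \<and> card (shadow G) \<le> card (shadow F)"
  let ?\<mu> = "\<lambda>G. card {A \<in> G. y \<notin> A}"
  obtain G where G: "?P G" and least: "\<And>H. ?P H \<Longrightarrow> ?\<mu> G \<le> ?\<mu> H"
    using ex_has_least_nat[of ?P F ?\<mu>] assms(3) by blast
  have "shifted x y G" for x
  proof (rule ccontr)
    assume "\<not> shifted x y G"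
    have "finite G" "finite (shadow G)"
      using G assms(1) shadow_subset_ksubsets[of G V k]
      by (auto intro: finite_subset[OF _ finite_ksubsets])
    then have "?P (shift_family x y G)"
      using G assms(2) shift_family_subset_ksubsets[of G V k y x]
        card_shift_family[of G x y] card_shadow_shift_family_le[of G x y] by simp
    then have "?\<mu> G \<le> ?\<mu> (shift_family x y G)"
      by (rule least)
    moreover have "?\<mu> (shift_family x y G) < ?\<mu> G"
      using \<open>finite G\<close> \<open>\<not> shifted x y G\<close> by (rule card_filter_shift_family_less) simp_all
    ultimately show False
      by simp
  qed
  with G that show thesis
    by blast
qed

lemma cross_dependent_mono:
  "cross_dependent s F \<Longrightarrow> (\<And>i. i \<le> s \<Longrightarrow> G i \<subseteq> F i) \<Longrightarrow> cross_dependent s G"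
  unfolding cross_dependent_def by blast

lemma obtain_cross_dependent_shifted_from:
  assumes "finite V" "\<forall>i\<le>s. F i \<subseteq> ksubsets V k" "cross_dependent s F"
  obtains G where "\<forall>i\<le>s. G i \<subseteq> ksubsets V k" "cross_dependent s G"
    "\<forall>i\<le>s. card (G i) = card (F i)" "\<forall>i\<le>s. \<forall>y\<in>V. shifted z y (G i)"
proof -
  let ?P = "\<lambda>G. (\<forall>i\<le>s. G i \<subseteq> ksubsets V k) \<and> cross_dependent s G \<and> (\<forall>i\<le>s. card (G i) = card (F i))"
  let ?\<mu> = "\<lambda>G. \<Sum>i\<le>s. card {A \<in> G i. z \<in> A}"
  obtain G where G: "?P G" and least: "\<And>H. ?P H \<Longrightarrow> ?\<mu> G \<le> ?\<mu> H"
    using ex_has_least_nat[of ?P F ?\<mu>] assms(2,3) by blast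
  have fin: "finite (G i)" if "i \<le> s" for i
    using G that assms(1) by (auto intro: finite_subset[OF _ finite_ksubsets])
  have "shifted z y (G i)" if "i \<le> s" "y \<in> V" for i y
  proof (rule ccontr)
    assume "\<not> shifted z y (G i)"
    let ?H = "\<lambda>j. shift_family z y (G j)"
    have "?P ?H"
      using G fin that(2) shift_family_subset_ksubsets[of "G _" V k y z]
        card_shift_family[of "G _" z y] cross_dependent_shift_family[of s G z y] by simp
    then have "?\<mu> G \<le> ?\<mu> ?H"
      by (rule least)
    moreover have "?\<mu> ?H < ?\<mu> G"
    proof (rule sum_strict_mono_ex1)
      show "\<forall>j\<in>{..s}. card {A \<in> ?H j. z \<in> A} \<le> card {A \<in> G j. z \<in> A}"
        using fin by (simp add: card_filter_shift_family_le)
      show "\<exists>j\<in>{..s}. card {A \<in> ?H j. z \<in> A} < card {A \<in> G j. z \<in> A}"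
        using that(1) fin[OF that(1)] \<open>\<not> shifted z y (G i)\<close>
        by (intro bexI[of _ i]) (simp_all add: card_filter_shift_family_less)
    qed simp
    ultimately show False
      by simp
  qed
  with G that show thesis
    by blast
qed

lemma avoiding_subset_ksubsets:
  "F \<subseteq> ksubsets V k \<Longrightarrow> {A \<in> F. x \<notin> A} \<subseteq> ksubsets (V - {x}) k"
  by (auto simp: ksubsets_def)

lemma link_subset_ksubsets:
  assumes "F \<subseteq> ksubsets V k"
  shows "link x F \<subseteq> ksubsets (V - {x}) (k - 1)"
  using assms by (auto simp: link_def ksubsets_def)

lemma card_eq_card_avoiding_plus_card_link:
  assumes "finite F"
  shows "card F = card {A \<in> F. x \<notin> A} + card (link x F)"
proof -
  have "inj_on (\<lambda>A. A - {x}) {A \<in> F. x \<in> A}"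
    by (rule inj_onI) (metis (no_types, lifting) insert_Diff mem_Collect_eq)
  then have "card (link x F) = card {A \<in> F. x \<in> A}"
    unfolding link_def by (rule card_image)
  moreover have "card F = card {A \<in> F. x \<notin> A} + card {A \<in> F. x \<in> A}"
    using assms by (subst card_Un_disjoint[symmetric]) (auto intro: arg_cong[where f = card])
  ultimately show ?thesis
    by simp
qed

lemma shadow_avoiding_subset_link:
  assumes "\<And>x. shifted x y F"
  shows "shadow {A \<in> F. y \<notin> A} \<subseteq> link y F"
proof
  fix B assume "B \<in> shadow {A \<in> F. y \<notin> A}"
  then obtain A x where A: "A \<in> F" "y \<notin> A" "x \<in> A" and B: "B = A - {x}"
    by (auto elim: shadowE)
  with assms have "insert y (A - {x}) \<in> F"
    by (intro shifted_insert_Diff_mem)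
  moreover have "insert y (A - {x}) - {y} = B"
    using A B by auto
  ultimately show "B \<in> link y F"
    unfolding link_def by (intro image_eqI[of _ _ "insert y (A - {x})"]) auto
qed

lemma card_link_plus_card_shadow_link_le:
  assumes "finite (shadow F)"
  shows "card (link y F) + card (shadow (link y F)) \<le> card (shadow F)"
proof -
  have avoid: "y \<notin> B" if "B \<in> link y F \<or> B \<in> shadow (link y F)" for B
    using that by (auto simp: link_def elim: shadowE)
  have "link y F \<subseteq> shadow F"
    by (auto simp: link_def intro: shadowI)
  moreover have "insert y ` shadow (link y F) \<subseteq> shadow F"
  proof
    fix C assume "C \<in> insert y ` shadow (link y F)"
    then obtain A z where "A \<in> F" "y \<in> A" "z \<in> A - {y}" "C = insert y (A - {y} - {z})"
      by (auto simp: link_def elim!: shadowE)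
    then have "C = A - {z}" "z \<in> A"
      by auto
    with \<open>A \<in> F\<close> show "C \<in> shadow F"
      by (simp add: shadowI)
  qed
  ultimately have "card (link y F \<union> insert y ` shadow (link y F)) \<le> card (shadow F)"
    using assms by (intro card_mono) auto
  moreover have "link y F \<inter> insert y ` shadow (link y F) = {}"
    using avoid by auto
  moreover have inj: "inj_on (insert y) (shadow (link y F))"
    using avoid by (intro inj_onI) (metis Diff_insert_absorb)
  moreover have "finite (link y F)" "finite (shadow (link y F))"
    using assms \<open>link y F \<subseteq> shadow F\<close> \<open>insert y ` shadow (link y F) \<subseteq> shadow F\<close>
      finite_imageD[OF _ inj] by (auto intro: finite_subset)
  ultimately show ?thesis
    by (simp add: card_Un_disjoint card_image)
qed

lemma shadow_nonempty:
  assumes "F \<subseteq> ksubsets V (Suc k)" "F \<noteq> {}"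
  shows "shadow F \<noteq> {}"
proof -
  obtain A where "A \<in> F"
    using assms(2) by blast
  with assms(1) have "A \<noteq> {}"
    by (auto simp: ksubsets_def)
  then obtain x where "x \<in> A"
    by blast
  with \<open>A \<in> F\<close> show ?thesis
    using shadowI[of A F x] by blast
qed

text \<open>The two lemmas below are the inductive step of choose_le_card_shadow; IH is its induction
hypothesis on the ground set V - {e}.\<close>

lemma choose_le_card_link_of_shifted:
  assumes "\<And>x. shifted x e G" "finite G" "G \<subseteq> ksubsets V (Suc k)" "k \<le> m"
    and "Suc m choose Suc k \<le> card G"
    and IH: "k < m \<Longrightarrow> m choose Suc k \<le> card {A \<in> G. e \<notin> A} \<Longrightarrow>
      m choose k \<le> card (shadow {A \<in> G. e \<notin> A})"
  shows "m choose k \<le> card (link e G)"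
proof (rule ccontr)
  let ?G\<^sub>0 = "{A \<in> G. e \<notin> A}"
  assume "\<not> m choose k \<le> card (link e G)"
  moreover have "card G = card ?G\<^sub>0 + card (link e G)"
    using assms(2) by (rule card_eq_card_avoiding_plus_card_link)
  ultimately have large: "m choose Suc k < card ?G\<^sub>0"
    using assms(5) by simp
  have "finite (link e G)"
    using assms(2) by (simp add: link_def)
  with assms(1) have "card (shadow ?G\<^sub>0) \<le> card (link e G)"
    by (intro card_mono shadow_avoiding_subset_link)
  moreover have "m choose k \<le> card (shadow ?G\<^sub>0)"
  proof (cases "k < m")
    case True
    with large IH show ?thesis
      by simp
  next
    case False
    with assms(4) have "m choose k = 1"
      by simp
    moreover have "?G\<^sub>0 \<noteq> {}"
      using large by (metis card.empty not_less_zero)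
    then have "shadow ?G\<^sub>0 \<noteq> {}"
      using assms(3) by (intro shadow_nonempty[of _ V k]) auto
    moreover have "finite (shadow ?G\<^sub>0)"
      using \<open>finite (link e G)\<close> assms(1) shadow_avoiding_subset_link finite_subset by metis
    ultimately show ?thesis
      by (simp add: Suc_leI card_gt_0_iff)
  qed
  ultimately show False
    using \<open>\<not> m choose k \<le> card (link e G)\<close> by linarith
qed

lemma choose_le_card_shadow_of_shifted:
  assumes "finite V" "G \<subseteq> ksubsets V (Suc (Suc j))" "\<And>x. shifted x e G"
    and "Suc j < m" "m choose Suc (Suc j) \<le> card G"
    and IH: "\<And>F k m. F \<subseteq> ksubsets (V - {e}) (Suc k) \<Longrightarrow> k < m \<Longrightarrow> m choose Suc k \<le> card F \<Longrightarrow>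
      m choose k \<le> card (shadow F)"
  shows "m choose Suc j \<le> card (shadow G)"
proof -
  obtain m' where m: "m = Suc m'"
    using assms(4) by (cases m) auto
  have "finite G"
    using assms(1,2) by (metis finite_ksubsets finite_subset)
  moreover have "{A \<in> G. e \<notin> A} \<subseteq> ksubsets (V - {e}) (Suc (Suc j))"
    using assms(2) by (rule avoiding_subset_ksubsets)
  ultimately have link: "m' choose Suc j \<le> card (link e G)"
    using assms(2-5) m by (intro choose_le_card_link_of_shifted[where V = V]) (auto intro: IH)
  have "link e G \<subseteq> ksubsets (V - {e}) (Suc j)"
    using link_subset_ksubsets[OF assms(2)] by simp
  with link assms(4) m have "m' choose j \<le> card (shadow (link e G))"
    by (intro IH) auto
  moreover have "card (link e G) + card (shadow (link e G)) \<le> card (shadow G)"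
    using assms(1) shadow_subset_ksubsets[OF assms(2)]
    by (intro card_link_plus_card_shadow_link_le) (metis finite_ksubsets finite_subset)
  ultimately show ?thesis
    using link m by simp
qed

theorem choose_le_card_shadow:
  assumes "finite V" "F \<subseteq> ksubsets V (Suc k)" "k < m" "m choose Suc k \<le> card F"
  shows "m choose k \<le> card (shadow F)"
  using assms
proof (induction "card V" arbitrary: V F k m rule: less_induct)
  case less
  have "0 < card F"
    using less.prems(3,4) zero_less_binomial[of "Suc k" m] by linarith
  then have "F \<noteq> {}"
    by (simp add: card_gt_0_iff)
  have "finite (shadow F)"
    using less.prems(1,2) shadow_subset_ksubsets by (metis finite_ksubsets finite_subset)
  show ?case
  proof (cases k)
    case 0
    with \<open>F \<noteq> {}\<close> less.prems(2) have "shadow F \<noteq> {}"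
      by (intro shadow_nonempty[of F V k]) simp_all
    with \<open>finite (shadow F)\<close> 0 show ?thesis
      by (simp add: Suc_leI card_gt_0_iff)
  next
    case (Suc j)
    from \<open>F \<noteq> {}\<close> obtain A where "A \<in> F"
      by blast
    with less.prems(2) have "A \<noteq> {}" "A \<subseteq> V"
      by (auto simp: ksubsets_def)
    then obtain e where "e \<in> V"
      by blast
    then obtain G where G: "G \<subseteq> ksubsets V (Suc k)" "card G = card F"
      "card (shadow G) \<le> card (shadow F)" "\<And>x. shifted x e G"
      using obtain_shifted_towards[OF less.prems(1) _ less.prems(2)] by blast
    have "card (V - {e}) < card V"
      using less.prems(1) \<open>e \<in> V\<close> by (rule card_Diff1_less)
    with less.prems(1) have "m' choose k' \<le> card (shadow F')"
      if "F' \<subseteq> ksubsets (V - {e}) (Suc k')" "k' < m'" "m' choose Suc k' \<le> card F'" for F' k' m'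
      using that by (intro less.hyps) simp_all
    with G less.prems(1,3,4) Suc have "m choose Suc j \<le> card (shadow G)"
      by (intro choose_le_card_shadow_of_shifted) simp_all
    with G(3) Suc show ?thesis
      by simp
  qed
qed

lemma card_link_le_of_shifted:
  assumes "finite V" "z \<notin> V" "G \<subseteq> ksubsets (insert z V) (Suc k)" "\<forall>y\<in>V. shifted z y G"
    and "k < m" "(m choose Suc k) + card {A \<in> G. z \<notin> A} \<le> card V choose Suc k"
  shows "card (link z G) + (m choose k) \<le> card V choose k"
proof -
  let ?G\<^sub>0 = "{A \<in> G. z \<notin> A}"
  define D where "D = ksubsets V (Suc k) - ?G\<^sub>0"
  have "?G\<^sub>0 \<subseteq> ksubsets V (Suc k)"
    using avoiding_subset_ksubsets[OF assms(3), of z] assms(2) by simp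
  then have "card D = (card V choose Suc k) - card ?G\<^sub>0"
    unfolding D_def using assms(1)
    by (simp add: card_Diff_subset card_ksubsets finite_ksubsets finite_subset)
  then have "m choose k \<le> card (shadow D)"
    using assms(1,5,6) by (intro choose_le_card_shadow[of V]) (auto simp: D_def)
  moreover have "link z G \<inter> shadow D = {}"
  proof (rule ccontr)
    assume "link z G \<inter> shadow D \<noteq> {}"
    then obtain B D\<^sub>0 y where B: "B \<in> G" "z \<in> B" and D\<^sub>0: "D\<^sub>0 \<in> D" "y \<in> D\<^sub>0"
      and eq: "B - {z} = D\<^sub>0 - {y}"
      by (auto simp: link_def elim!: shadowE)
    have "y \<in> V"
      using D\<^sub>0 by (auto simp: D_def ksubsets_def)
    with assms(2) eq have "y \<notin> B"
      by blast
    with B assms(4) \<open>y \<in> V\<close> have "insert y (B - {z}) \<in> G"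
      by (intro shifted_insert_Diff_mem) simp_all
    moreover have "insert y (B - {z}) = D\<^sub>0"
      using eq D\<^sub>0(2) by blast
    ultimately show False
      using D\<^sub>0(1) assms(2) \<open>y \<in> V\<close> by (auto simp: D_def ksubsets_def)
  qed
  moreover have "link z G \<subseteq> ksubsets V k" "shadow D \<subseteq> ksubsets V k"
    using link_subset_ksubsets[OF assms(3), of z] assms(2) shadow_subset_ksubsets[of D V "Suc k"]
    by (auto simp: D_def)
  ultimately show ?thesis
    using assms(1) card_mono[OF finite_ksubsets[OF assms(1)], of "link z G \<union> shadow D" k]
    by (simp add: card_Un_disjoint card_ksubsets finite_ksubsets finite_subset)
qed

lemma card_le_of_shifted:
  assumes "finite V" "z \<notin> V" "G \<subseteq> ksubsets (insert z V) (Suc k)" "\<forall>y\<in>V. shifted z y G"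
    and "k < m" "m \<le> card V" "card {A \<in> G. z \<notin> A} \<le> (card V choose Suc k) - (m choose Suc k)"
  shows "card G \<le> (Suc (card V) choose Suc k) - (Suc m choose Suc k)"
proof -
  have "m choose Suc k \<le> card V choose Suc k" "m choose k \<le> card V choose k"
    using assms(6) by (simp_all add: binomial_right_mono)
  moreover have "card (link z G) + (m choose k) \<le> card V choose k"
    using assms(1-5,7) calculation by (intro card_link_le_of_shifted) simp_all
  moreover have "finite G"
    using assms(1,3) by (metis finite_insert finite_ksubsets finite_subset)
  then have "card G = card {A \<in> G. z \<notin> A} + card (link z G)"
    by (rule card_eq_card_avoiding_plus_card_link)
  ultimately show ?thesis
    using assms(7) by simp
qed

lemma Min_image_le_iff:
  fixes f :: "nat \<Rightarrow> 'a::linorder"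
  shows "Min (f ` {0..s}) \<le> x \<longleftrightarrow> (\<exists>i\<le>s. f i \<le> x)"
  by (subst Min_le_iff) auto

lemma cross_dependent_bound_insert:
  assumes "finite V" "z \<notin> V" "k < m" "m \<le> card V"
    and bound: "\<And>G. \<forall>i\<le>s. G i \<subseteq> ksubsets V (Suc k) \<Longrightarrow> cross_dependent s G \<Longrightarrow>
      \<exists>i\<le>s. card (G i) \<le> (card V choose Suc k) - (m choose Suc k)"
    and "\<forall>i\<le>s. F i \<subseteq> ksubsets (insert z V) (Suc k)" "cross_dependent s F"
  shows "\<exists>i\<le>s. card (F i) \<le> (Suc (card V) choose Suc k) - (Suc m choose Suc k)"
proof -
  obtain G where G: "\<forall>i\<le>s. G i \<subseteq> ksubsets (insert z V) (Suc k)" "cross_dependent s G"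
    "\<forall>i\<le>s. card (G i) = card (F i)" "\<forall>i\<le>s. \<forall>y\<in>insert z V. shifted z y (G i)"
    using obtain_cross_dependent_shifted_from[OF _ assms(6,7)] assms(1) by blast
  let ?A = "\<lambda>i. {B \<in> G i. z \<notin> B}"
  have "\<forall>i\<le>s. ?A i \<subseteq> ksubsets V (Suc k)"
    using G(1) avoiding_subset_ksubsets[of "G _" "insert z V" "Suc k" z] assms(2) by simp
  moreover have "cross_dependent s ?A"
    using G(2) by (rule cross_dependent_mono) blast
  ultimately have "\<exists>i\<le>s. card (?A i) \<le> (card V choose Suc k) - (m choose Suc k)"
    by (rule bound)
  then obtain i where "i \<le> s" "card (?A i) \<le> (card V choose Suc k) - (m choose Suc k)"
    by blast
  with G assms(1-4) have "card (G i) \<le> (Suc (card V) choose Suc k) - (Suc m choose Suc k)"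
    by (intro card_le_of_shifted) simp_all
  with G(3) \<open>i \<le> s\<close> show ?thesis
    by auto
qed

theorem proposition1:
  fixes n s k :: nat
  assumes "n > 0" "s > 0" "k > 0" "n \<ge> (s + 1) * k"
    and hyp: "\<And>G :: nat \<Rightarrow> nat set set.
              (\<forall>i\<le>s. G i \<subseteq> ksubsets {1..n} k) \<Longrightarrow> cross_dependent s G \<Longrightarrow>
              Min ((\<lambda>i. card (G i)) ` {0..s}) \<le> (n choose k) - ((n - s) choose k)"
  shows "\<And>F :: nat \<Rightarrow> nat set set.
           (\<forall>i\<le>s. F i \<subseteq> ksubsets {1..n+1} k) \<Longrightarrow> cross_dependent s F \<Longrightarrow>
           Min ((\<lambda>i. card (F i)) ` {0..s}) \<le> ((n + 1) choose k) - ((n + 1 - s) choose k)"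
proof -
  fix F :: "nat \<Rightarrow> nat set set"
  assume F: "\<forall>i\<le>s. F i \<subseteq> ksubsets {1..n+1} k" and "cross_dependent s F"
  obtain k' where k: "k = Suc k'"
    using \<open>k > 0\<close> by (cases k) auto
  have "s + k \<le> (s + 1) * k"
    using \<open>k > 0\<close> by (simp add: algebra_simps)
  with \<open>n \<ge> (s + 1) * k\<close> have "k \<le> n - s" "n + 1 - s = Suc (n - s)"
    by linarith+
  have "insert (n + 1) {1..n} = {1..n + 1}"
    by auto
  with F k have F': "\<forall>i\<le>s. F i \<subseteq> ksubsets (insert (n + 1) {1..n}) (Suc k')"
    by simp
  have bound: "\<exists>i\<le>s. card (G i) \<le> (card {1..n} choose Suc k') - (n - s choose Suc k')"
    if "\<forall>i\<le>s. G i \<subseteq> ksubsets {1..n} (Suc k')" "cross_dependent s G" for G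
  proof -
    have "Min ((\<lambda>i. card (G i)) ` {0..s}) \<le> (n choose k) - ((n - s) choose k)"
      using that k by (intro hyp) simp_all
    then show ?thesis
      unfolding Min_image_le_iff k by simp
  qed
  have "\<exists>i\<le>s. card (F i) \<le> (Suc (card {1..n}) choose Suc k') - (Suc (n - s) choose Suc k')"
    by (rule cross_dependent_bound_insert[OF _ _ _ _ bound F' \<open>cross_dependent s F\<close>])
      (use \<open>k \<le> n - s\<close> k in simp_all)
  with k \<open>n + 1 - s = Suc (n - s)\<close>
  show "Min ((\<lambda>i. card (F i)) ` {0..s}) \<le> ((n + 1) choose k) - ((n + 1 - s) choose k)"
    unfolding Min_image_le_iff by simp
qed

end
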